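(* Let $G$ be a finite simple graph with a vertex $v$ such that $\deg(v)\leq k$, and let $m\ge 1$. Then the $(m-k-1)$-skeleton of $\mathrm{Hom}(G\setminus\{v\},K_m)$ is contained in $\mathrm{Hom}_{\{v\}}(G,K_m)$.
   Context: Graphs are finite, undirected and simple; $K_m$ is the complete graph on $m$ vertices; $G\setminus\{v\}$ is the induced subgraph on $V(G)\setminus\{v\}$. For graphs $G,H$, the homomorphism complex $\mathrm{Hom}(G,H)$ is the polyhedral complex whose cells are functions $\eta:V(G)\to 2^{V(H)}\setminus\{\varnothing\}$ such that whenever $\{x,y\}\in E(G)$ we have $\eta(x)\times\eta(y)\subseteq E(H)$; the cell $\eta$ is a product of simplices of dimension $\sum_{v\in V(G)}(|\eta(v)|-1)$, with $\eta\subseteq\tau$ iff $\eta(v)\subseteq\tau(v)$ for all $v$. For an independent set $I$ of $G$, $\mathrm{Hom}_I(G,H)$ is the subcomplex of $\mathrm{Hom}(G\setminus I,H)$ consisting of all cells $\eta\in\mathrm{Hom}(G\setminus I,H)$ for which there exists a cell $\overline{\eta}\in\mathrm{Hom}(G,H)$ with $\overline{\eta}|_{V(G)\setminus I}=\eta$. *)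

theory Defs
  imports Main
begin

definition simple_graph :: "'a set \<Rightarrow> ('a \<Rightarrow> 'a \<Rightarrow> bool) \<Rightarrow> bool" where
  "simple_graph V E \<longleftrightarrow> finite V \<and>
     (\<forall>x y. E x y \<longrightarrow> x \<in> V \<and> y \<in> V \<and> x \<noteq> y \<and> E y x)"

definition degree :: "'a set \<Rightarrow> ('a \<Rightarrow> 'a \<Rightarrow> bool) \<Rightarrow> 'a \<Rightarrow> nat" where
  "degree V E v = card {u \<in> V. E v u}"

definition K_verts :: "nat \<Rightarrow> nat set" where
  "K_verts m = {..<m}"

definition K_edges :: "nat \<Rightarrow> nat \<Rightarrow> bool" where
  "K_edges a b \<longleftrightarrow> a \<noteq> b"

definition induced_edges :: "'a set \<Rightarrow> ('a \<Rightarrow> 'a \<Rightarrow> bool) \<Rightarrow> 'a \<Rightarrow> 'a \<Rightarrow> bool" where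
  "induced_edges U E x y \<longleftrightarrow> x \<in> U \<and> y \<in> U \<and> E x y"

definition hom_cell :: "'a set \<Rightarrow> ('a \<Rightarrow> 'a \<Rightarrow> bool) \<Rightarrow> 'b set \<Rightarrow> ('b \<Rightarrow> 'b \<Rightarrow> bool)
    \<Rightarrow> ('a \<Rightarrow> 'b set) \<Rightarrow> bool" where
  "hom_cell V E W F \<eta> \<longleftrightarrow>
     (\<forall>x\<in>V. \<eta> x \<noteq> {} \<and> \<eta> x \<subseteq> W) \<and> (\<forall>x. x \<notin> V \<longrightarrow> \<eta> x = {}) \<and>
     (\<forall>x\<in>V. \<forall>y\<in>V. E x y \<longrightarrow> (\<forall>a\<in>\<eta> x. \<forall>b\<in>\<eta> y. F a b))"

definition Hom :: "'a set \<Rightarrow> ('a \<Rightarrow> 'a \<Rightarrow> bool) \<Rightarrow> 'b set \<Rightarrow> ('b \<Rightarrow> 'b \<Rightarrow> bool)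
    \<Rightarrow> ('a \<Rightarrow> 'b set) set" where
  "Hom V E W F = {\<eta>. hom_cell V E W F \<eta>}"

definition cell_dim :: "'a set \<Rightarrow> ('a \<Rightarrow> 'b set) \<Rightarrow> int" where
  "cell_dim V \<eta> = (\<Sum>x\<in>V. int (card (\<eta> x)) - 1)"

definition skeleton :: "int \<Rightarrow> 'a set \<Rightarrow> ('a \<Rightarrow> 'a \<Rightarrow> bool) \<Rightarrow> 'b set \<Rightarrow> ('b \<Rightarrow> 'b \<Rightarrow> bool)
    \<Rightarrow> ('a \<Rightarrow> 'b set) set" where
  "skeleton d V E W F = {\<eta> \<in> Hom V E W F. cell_dim V \<eta> \<le> d}"

definition Hom_I :: "'a set \<Rightarrow> 'a set \<Rightarrow> ('a \<Rightarrow> 'a \<Rightarrow> bool) \<Rightarrow> 'b set \<Rightarrow> ('b \<Rightarrow> 'b \<Rightarrow> bool)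
    \<Rightarrow> ('a \<Rightarrow> 'b set) set" where
  "Hom_I I V E W F = {\<eta> \<in> Hom (V - I) (induced_edges (V - I) E) W F.
      \<exists>\<eta>'. \<eta>' \<in> Hom V E W F \<and> (\<forall>x \<in> V - I. \<eta>' x = \<eta> x)}"

end

theory Submission
  imports Defs
begin

text \<open>A cell of dimension at most \<open>m - k - 1\<close> uses at most \<open>(m - k - 1) + k = m - 1\<close>
colours on the at most \<open>k\<close> neighbours of \<open>v\<close>, since a vertex carrying \<open>s\<close> colours
contributes \<open>s - 1\<close> to the dimension. Hence some colour of \<open>K\<^sub>m\<close> is missed on the
neighbourhood of \<open>v\<close>, and assigning it to \<open>v\<close> extends the cell to a cell of \<open>Hom(G, K\<^sub>m)\<close>.\<close>

lemma cell_dim_mono: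
  assumes "finite V" "N \<subseteq> V" "\<And>x. x \<in> V \<Longrightarrow> \<eta> x \<noteq> {} \<and> finite (\<eta> x)"
  shows "cell_dim N \<eta> \<le> cell_dim V \<eta>"
  unfolding cell_dim_def
proof (rule sum_mono2)
  show "0 \<le> int (card (\<eta> x)) - 1" if "x \<in> V - N" for x
    using assms(3) that by (simp add: Suc_leI card_gt_0_iff)
qed (use assms in auto)

lemma card_UN_le_cell_dim:
  assumes "finite N"
  shows "int (card (\<Union>x\<in>N. \<eta> x)) \<le> cell_dim N \<eta> + int (card N)"
proof -
  have "card (\<Union>x\<in>N. \<eta> x) \<le> (\<Sum>x\<in>N. card (\<eta> x))"
    using assms by (rule card_UN_le)
  then show ?thesis
    by (simp add: cell_dim_def sum_subtractf flip: of_nat_sum)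
qed

lemma hom_cell_fresh_colour:
  assumes cell: "hom_cell V E (K_verts m) F \<eta>"
    and "finite V" "N \<subseteq> V"
    and dim: "cell_dim V \<eta> \<le> int m - int (card N) - 1"
  obtains c where "c < m" "\<And>x. x \<in> N \<Longrightarrow> c \<notin> \<eta> x"
proof -
  have colours: "\<And>x. x \<in> V \<Longrightarrow> \<eta> x \<noteq> {} \<and> \<eta> x \<subseteq> {..<m}"
    using cell by (auto simp: hom_cell_def K_verts_def)
  then have fin_colours: "\<And>x. x \<in> V \<Longrightarrow> \<eta> x \<noteq> {} \<and> finite (\<eta> x)"
    using finite_subset by blast
  have "finite N" using assms(2,3) finite_subset by blast
  then have "int (card (\<Union>x\<in>N. \<eta> x)) \<le> cell_dim N \<eta> + int (card N)"
    by (rule card_UN_le_cell_dim)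
  also have "\<dots> \<le> cell_dim V \<eta> + int (card N)"
    using cell_dim_mono[OF assms(2,3) fin_colours] by simp
  finally have "card (\<Union>x\<in>N. \<eta> x) < card {..<m}"
    using dim by simp
  moreover have "(\<Union>x\<in>N. \<eta> x) \<subseteq> {..<m}"
    using colours assms(3) by blast
  ultimately have "\<not> {..<m} \<subseteq> (\<Union>x\<in>N. \<eta> x)"
    by (metis card_mono finite_lessThan finite_subset leD)
  then show thesis using that by auto
qed

lemma hom_cell_extend_vertex:
  assumes "simple_graph V E" "v \<in> V" "c \<in> W"
    and cell: "hom_cell (V - {v}) (induced_edges (V - {v}) E) W F \<eta>"
    and fresh: "\<And>u b. E v u \<Longrightarrow> b \<in> \<eta> u \<Longrightarrow> F c b \<and> F b c"
  shows "hom_cell V E W F (\<eta>(v := {c}))"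
proof -
  have E: "\<And>x y. E x y \<Longrightarrow> x \<in> V \<and> y \<in> V \<and> x \<noteq> y \<and> E y x"
    using assms(1) by (auto simp: simple_graph_def)
  have "F a b"
    if "x \<in> V" "y \<in> V" "E x y" "a \<in> (\<eta>(v := {c})) x" "b \<in> (\<eta>(v := {c})) y" for x y a b
  proof (cases "x = v \<or> y = v")
    case True
    then show ?thesis using that fresh E by (metis fun_upd_apply singletonD)
  next
    case False
    then show ?thesis
      using that cell by (auto simp: hom_cell_def induced_edges_def)
  qed
  then show ?thesis
    using cell assms(2,3) by (auto simp: hom_cell_def)
qed

theorem lemma3p3:
  fixes V :: "'a set" and E :: "'a \<Rightarrow> 'a \<Rightarrow> bool" and v :: 'a and k m :: nat
  assumes "simple_graph V E"
    and "v \<in> V"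
    and "degree V E v \<le> k"
    and "m \<ge> 1"
  shows "skeleton (int m - int k - 1) (V - {v}) (induced_edges (V - {v}) E) (K_verts m) K_edges
           \<subseteq> Hom_I {v} V E (K_verts m) K_edges"
proof
  fix \<eta>
  assume "\<eta> \<in> skeleton (int m - int k - 1) (V - {v}) (induced_edges (V - {v}) E) (K_verts m) K_edges"
  then have cell: "hom_cell (V - {v}) (induced_edges (V - {v}) E) (K_verts m) K_edges \<eta>"
    and dim: "cell_dim (V - {v}) \<eta> \<le> int m - int k - 1"
    by (auto simp: skeleton_def Hom_def)
  define N where "N = {u \<in> V. E v u}"
  have "finite V" "N \<subseteq> V - {v}"
    using assms(1) by (auto simp: simple_graph_def N_def)
  moreover have "cell_dim (V - {v}) \<eta> \<le> int m - int (card N) - 1"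
    using dim assms(3) by (simp add: degree_def N_def)
  ultimately obtain c where c: "c < m" "\<And>u. u \<in> N \<Longrightarrow> c \<notin> \<eta> u"
    using hom_cell_fresh_colour[OF cell] by (metis finite_Diff)
  have "\<And>u. E v u \<Longrightarrow> u \<in> N"
    using assms(1) by (auto simp: simple_graph_def N_def)
  then have "hom_cell V E (K_verts m) K_edges (\<eta>(v := {c}))"
    using c by (intro hom_cell_extend_vertex[OF assms(1,2) _ cell]) (auto simp: K_verts_def K_edges_def)
  then show "\<eta> \<in> Hom_I {v} V E (K_verts m) K_edges"
    using cell by (auto simp: Hom_I_def Hom_def)
qed

end
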